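(* The rules (A1)–(A8) for approximate exclusion atoms are sound: if an approximate exclusion atom $\varphi$ is derivable from a set $\Sigma$ of approximate exclusion atoms using (A1)–(A8), then every team satisfying all atoms of $\Sigma$ satisfies $\varphi$.
   Context: A team $T$ is a finite set of assignments $s:\mathcal{V}\to M$ ($\mathcal{V}$ a set of variables, $M$ a set of values). Letters $x,y,z,u,v,w,\dots$ denote finite tuples of variables; juxtaposition denotes concatenation; $s(x)=\langle s(x_1),\dots,s(x_n)\rangle$. For $|x|=|y|$, $T\models x|y$ iff $s_1(x)\neq s_2(y)$ for all $s_1,s_2\in T$. For a real $0\le p\le 1$, the approximate exclusion atom $x|_p y$ is satisfied, $T\models x|_py$, iff there is $T'\subseteq T$ with $|T'|\le p\cdot|T|$ and $T\setminus T'\models x|y$. The rules (schemata over tuples, atoms well-formed) are: (A1) $x|_px\vdash y|_0z$ for $p<1$; (A2) $x|_py\vdash y|_px$; (A3) $x|_py\vdash xu|_pyv$; (A4) $xuu|_pyvv\vdash xu|_pyv$; (A5) $xyz|_puvw\vdash xzy|_puwv$ where $|x|=|u|$, $|y|=|v|$; (A6) $xw|_pyw\vdash zz|_pxy$; (A7) $x|_qy\vdash x|_py$ for $q\le p\le 1$; (A8) $\vdash x|_1y$. *)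

theory Defs
  imports Main "HOL.Real"
begin

text \<open>An approximate exclusion atom x |_p y is
represented as the triple (x, p, y).\<close>

type_synonym 'v atom = "'v list \<times> real \<times> 'v list"

definition excl :: "('v \<Rightarrow> 'm) set \<Rightarrow> 'v list \<Rightarrow> 'v list \<Rightarrow> bool" where
  "excl T x y \<longleftrightarrow> (\<forall>s1\<in>T. \<forall>s2\<in>T. map s1 x \<noteq> map s2 y)"

definition approx_excl :: "('v \<Rightarrow> 'm) set \<Rightarrow> 'v list \<Rightarrow> real \<Rightarrow> 'v list \<Rightarrow> bool" where
  "approx_excl T x p y \<longleftrightarrow>
     (\<exists>T'. T' \<subseteq> T \<and> real (card T') \<le> p * real (card T) \<and> excl (T - T') x y)"

fun team_sat :: "('v \<Rightarrow> 'm) set \<Rightarrow> 'v atom \<Rightarrow> bool" where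
  "team_sat T (x, p, y) = approx_excl T x p y"

fun wf_atom :: "'v atom \<Rightarrow> bool" where
  "wf_atom (x, p, y) \<longleftrightarrow> length x = length y \<and> 0 \<le> p \<and> p \<le> 1"

inductive derivable :: "'v atom set \<Rightarrow> 'v atom \<Rightarrow> bool" for S where
  hyp: "\<phi> \<in> S \<Longrightarrow> derivable S \<phi>"
| A1: "derivable S (x, p, x) \<Longrightarrow> p < 1 \<Longrightarrow> length y = length z \<Longrightarrow> derivable S (y, 0, z)"
| A2: "derivable S (x, p, y) \<Longrightarrow> derivable S (y, p, x)"
| A3: "derivable S (x, p, y) \<Longrightarrow> length u = length v \<Longrightarrow> derivable S (x @ u, p, y @ v)"
| A4: "derivable S (x @ u @ u, p, y @ v @ v) \<Longrightarrow> length x = length y \<Longrightarrow> length u = length v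
        \<Longrightarrow> derivable S (x @ u, p, y @ v)"
| A5: "derivable S (x @ y @ z, p, u @ v @ w) \<Longrightarrow> length x = length u \<Longrightarrow> length y = length v
        \<Longrightarrow> length z = length w \<Longrightarrow> derivable S (x @ z @ y, p, u @ w @ v)"
| A6: "derivable S (x @ w, p, y @ w) \<Longrightarrow> length x = length y \<Longrightarrow> length z = length x
        \<Longrightarrow> derivable S (z @ z, p, x @ y)"
| A7: "derivable S (x, q, y) \<Longrightarrow> q \<le> p \<Longrightarrow> p \<le> 1 \<Longrightarrow> derivable S (x, p, y)"
| A8: "length x = length y \<Longrightarrow> derivable S (x, 1, y)"

end

theory Submission
  imports Defs
begin

text \<open>Rules (A2)--(A6) follow from implications between exact exclusion atoms that are valid
in every team, so they carry over to approximate atoms with the same removed subteam \<open>T'\<close>;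
(A7) and (A8) only concern the bound on \<open>|T'|\<close>. For (A1), \<open>x |_p x\<close> can only hold by
removing the whole team, which for \<open>p < 1\<close> forces the team to be empty, and the empty team
satisfies every atom.\<close>

lemma map_append_eq_map_append_iff:
  assumes "length a = length c"
  shows "map f (a @ b) = map g (c @ d) \<longleftrightarrow> map f a = map g c \<and> map f b = map g d"
  using assms by simp

lemma excl_sym: "excl T x y \<Longrightarrow> excl T y x"
  unfolding excl_def by metis

lemma excl_append:
  "excl T x y \<Longrightarrow> length u = length v \<Longrightarrow> excl T (x @ u) (y @ v)"
  unfolding excl_def by (metis append_eq_append_conv length_map map_append)

lemma excl_remove_duplicate:
  assumes "excl T (x @ u @ u) (y @ v @ v)" "length x = length y"
  shows "excl T (x @ u) (y @ v)"
  using assms unfolding excl_def by (simp add: map_append_eq_map_append_iff) metis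

lemma excl_swap:
  assumes "excl T (x @ y @ z) (u @ v @ w)" "length x = length u" "length y = length v"
  shows "excl T (x @ z @ y) (u @ w @ v)"
  using assms unfolding excl_def by (auto simp: map_append_eq_map_append_iff)

lemma excl_diagonal:
  assumes "excl T (x @ w) (y @ w)" "length x = length y" "length z = length x"
  shows "excl T (z @ z) (x @ y)"
  unfolding excl_def
proof (intro ballI notI)
  fix s1 s2
  assume "s1 \<in> T" "s2 \<in> T" and "map s1 (z @ z) = map s2 (x @ y)"
  with assms(2,3) have "map s2 x = map s2 y"
    by (metis map_append_eq_map_append_iff)
  then have "map s2 (x @ w) = map s2 (y @ w)" by simp
  with assms(1) \<open>s2 \<in> T\<close> show False
    unfolding excl_def by blast
qed

lemma approx_excl_mono_excl:
  assumes "approx_excl T x p y" "\<And>U. U \<subseteq> T \<Longrightarrow> excl U x y \<Longrightarrow> excl U x' y'"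
  shows "approx_excl T x' p y'"
  using assms unfolding approx_excl_def by (meson Diff_subset)

lemma approx_excl_mono_bound:
  assumes "approx_excl T x q y" "q \<le> p"
  shows "approx_excl T x p y"
  using assms unfolding approx_excl_def by (meson mult_right_mono of_nat_0_le_iff order_trans)

lemma approx_excl_one: "approx_excl T x 1 y"
  unfolding approx_excl_def excl_def by (intro exI[of _ T]) simp

lemma approx_excl_empty: "approx_excl {} x p y"
  unfolding approx_excl_def excl_def by simp

lemma approx_excl_self_imp_empty:
  assumes "approx_excl T x p x" "p < 1" "finite T"
  shows "T = {}"
proof -
  obtain T' where "T' \<subseteq> T" and card_T': "real (card T') \<le> p * real (card T)"
    and "excl (T - T') x x"
    using assms(1) unfolding approx_excl_def by blast
  then have "T' = T"
    unfolding excl_def by blast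
  with card_T' have "real (card T) \<le> p * real (card T)" by simp
  with \<open>p < 1\<close> have "card T = 0"
    by (metis mult_less_cancel_right2 not_le of_nat_0_less_iff not_gr_zero)
  with \<open>finite T\<close> show ?thesis by simp
qed

theorem lemma3:
  fixes S :: "'v atom set" and \<phi> :: "'v atom" and T :: "('v \<Rightarrow> 'm) set"
  assumes "\<forall>\<psi>\<in>S. wf_atom \<psi>"
    and "derivable S \<phi>"
    and "finite T"
    and "\<forall>\<psi>\<in>S. team_sat T \<psi>"
  shows "team_sat T \<phi>"
  using assms(2)
proof (induction rule: derivable.induct)
  case (hyp \<phi>)
  with assms(4) show ?case by blast
next
  case (A1 x p y z)
  with assms(3) have "T = {}"
    using approx_excl_self_imp_empty[of T x p] by simp
  then show ?case by (simp add: approx_excl_empty)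
next
  case (A2 x p y)
  show ?case
    using A2.IH unfolding team_sat.simps
    by (rule approx_excl_mono_excl) (blast intro: excl_sym)
next
  case (A3 x p y u v)
  show ?case
    using A3.IH unfolding team_sat.simps
    by (rule approx_excl_mono_excl) (auto intro: excl_append A3.hyps)
next
  case (A4 x u p y v)
  show ?case
    using A4.IH unfolding team_sat.simps
    by (rule approx_excl_mono_excl) (auto intro: excl_remove_duplicate A4.hyps)
next
  case (A5 x y z p u v w)
  show ?case
    using A5.IH unfolding team_sat.simps
    by (rule approx_excl_mono_excl) (auto intro: excl_swap A5.hyps)
next
  case (A6 x w p y z)
  show ?case
    using A6.IH unfolding team_sat.simps
    by (rule approx_excl_mono_excl) (auto intro: excl_diagonal simp: A6.hyps)
next
  case (A7 x q y p)
  then show ?case by (simp add: approx_excl_mono_bound)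
next
  case (A8 x y)
  show ?case by (simp add: approx_excl_one)
qed

end
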